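(* Let $I\ge 1$ and positive integers $J_1,\dots,J_I$ be given, and set $J_0=J_{I+1}=1$. Let real weights $W_{\hat j,i,j}$ (for $i=1,\dots,I+1$, $j=1,\dots,J_i$, $\hat j=1,\dots,J_{i-1}$) and real biases $B_{i,j}$ (for $i=1,\dots,I+1$, $j=1,\dots,J_i$) be given, and assume $W_{\hat j,i,j}\ge 0$ for all indices. Let $N:\mathbb{R}\to\mathbb{R}$ be the function computed by the ReLU network with these parameters, defined in the context below. Fix $x\in\mathbb{R}$ and consider the linear program in the variables $\sigma_{i,j}$ ($i=1,\dots,I$, $j=1,\dots,J_i$) and $\theta\in\mathbb{R}$: $$\min\ \theta$$ subject to $$\sigma_{i,j}\ge 0 \quad \forall i,j,$$ $$\sigma_{1,j}\ge W_{1,1,j}\,x+B_{1,j}\quad \forall j=1,\dots,J_1,$$ $$\sigma_{i,j}\ge \sum_{\hat j=1}^{J_{i-1}} W_{\hat j,i,j}\,\sigma_{i-1,\hat j}+B_{i,j}\quad \forall i=2,\dots,I,\ j=1,\dots,J_i,$$ $$\theta=\sum_{\hat j=1}^{J_I} W_{\hat j,I+1,1}\,\sigma_{I,\hat j}+B_{I+1,1}.$$ Then this linear program is feasible and bounded below, and its optimal value equals $N(x)$. Moreover, setting each $\sigma_{i,j}$ equal to the ReLU activation $a_{i,j}(x)$ gives an optimal solution, and every feasible solution satisfies $\sigma_{i,j}\ge a_{i,j}(x)$ for all $i,j$.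
   Context: The network function $N$ is defined as follows. For input $x\in\mathbb{R}$, set $a_{1,j}(x)=\max\bigl(0,\,W_{1,1,j}x+B_{1,j}\bigr)$ for $j=1,\dots,J_1$; for $i=2,\dots,I$ and $j=1,\dots,J_i$, set $a_{i,j}(x)=\max\bigl(0,\,\sum_{\hat j=1}^{J_{i-1}}W_{\hat j,i,j}\,a_{i-1,\hat j}(x)+B_{i,j}\bigr)$; finally $N(x)=\sum_{\hat j=1}^{J_I}W_{\hat j,I+1,1}\,a_{I,\hat j}(x)+B_{I+1,1}$ (no activation is applied at the output node). Here $W_{\hat j,i,j}$ is the weight of the connection from node $\hat j$ in layer $i-1$ to node $j$ in layer $i$ (layer $0$ being the single input and layer $I+1$ the single output), and $B_{i,j}$ is the bias of node $j$ in layer $i$. *)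

theory Defs
  imports "HOL-Analysis.Analysis"
begin

text \<open>Indices are 1-based, as in the paper. Weights: W jh i j is the weight from node jh of
layer i-1 to node j of layer i; biases: B i j. J i is the width of layer i (i = 1..I);
layer 0 (input) and layer I+1 (output) have width 1.\<close>

fun act :: "(nat \<Rightarrow> nat \<Rightarrow> nat \<Rightarrow> real) \<Rightarrow> (nat \<Rightarrow> nat \<Rightarrow> real) \<Rightarrow> (nat \<Rightarrow> nat)
            \<Rightarrow> real \<Rightarrow> nat \<Rightarrow> nat \<Rightarrow> real" where
  "act W B J x 0 j = 0"
| "act W B J x (Suc 0) j = max 0 (W 1 1 j * x + B 1 j)"
| "act W B J x (Suc (Suc i)) j =
     max 0 ((\<Sum>jh = 1..J (Suc i). W jh (Suc (Suc i)) j * act W B J x (Suc i) jh) + B (Suc (Suc i)) j)"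

definition net :: "nat \<Rightarrow> (nat \<Rightarrow> nat) \<Rightarrow> (nat \<Rightarrow> nat \<Rightarrow> nat \<Rightarrow> real) \<Rightarrow> (nat \<Rightarrow> nat \<Rightarrow> real)
                   \<Rightarrow> real \<Rightarrow> real" where
  "net I J W B x = (\<Sum>jh = 1..J I. W jh (I + 1) 1 * act W B J x I jh) + B (I + 1) 1"

text \<open>Feasibility of (sigma, theta) for the linear program at input x.
Only the values sigma i j with 1 \<le> i \<le> I, 1 \<le> j \<le> J i are variables.\<close>
definition lp_feasible :: "nat \<Rightarrow> (nat \<Rightarrow> nat) \<Rightarrow> (nat \<Rightarrow> nat \<Rightarrow> nat \<Rightarrow> real) \<Rightarrow> (nat \<Rightarrow> nat \<Rightarrow> real)
                   \<Rightarrow> real \<Rightarrow> (nat \<Rightarrow> nat \<Rightarrow> real) \<Rightarrow> real \<Rightarrow> bool" where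
  "lp_feasible I J W B x \<sigma> \<theta> \<longleftrightarrow>
     (\<forall>i\<in>{1..I}. \<forall>j\<in>{1..J i}. \<sigma> i j \<ge> 0)
   \<and> (\<forall>j\<in>{1..J 1}. \<sigma> 1 j \<ge> W 1 1 j * x + B 1 j)
   \<and> (\<forall>i\<in>{2..I}. \<forall>j\<in>{1..J i}.
        \<sigma> i j \<ge> (\<Sum>jh = 1..J (i - 1). W jh i j * \<sigma> (i - 1) jh) + B i j)
   \<and> \<theta> = (\<Sum>jh = 1..J I. W jh (I + 1) 1 * \<sigma> I jh) + B (I + 1) 1"

end

theory Submission
  imports Defs
begin

text \<open>The ReLU activation \<open>max 0 t\<close> is the least \<open>s\<close> with \<open>s \<ge> 0\<close> and \<open>s \<ge> t\<close>, so the activations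
satisfy every constraint of the linear program. Conversely, nonnegative weights make each layer's
constraint monotone in the previous layer, so by induction over the layers every feasible \<open>\<sigma>\<close>
dominates the activations, and hence every feasible \<open>\<theta>\<close> dominates \<open>N(x)\<close>, which is attained.\<close>

lemma sum_mult_left_mono:
  fixes w f g :: "'a \<Rightarrow> 'b::ordered_comm_semiring"
  assumes "\<And>k. k \<in> A \<Longrightarrow> 0 \<le> w k" and "\<And>k. k \<in> A \<Longrightarrow> f k \<le> g k"
  shows "(\<Sum>k\<in>A. w k * f k) \<le> (\<Sum>k\<in>A. w k * g k)"
  using assms by (intro sum_mono mult_left_mono) auto

lemma act_Suc:
  "i \<ge> 1 \<Longrightarrow> act W B J x (Suc i) j =
     max 0 ((\<Sum>jh = 1..J i. W jh (Suc i) j * act W B J x i jh) + B (Suc i) j)"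
  by (cases i) auto

lemma act_nonneg: "act W B J x i j \<ge> 0"
  by (cases "(W, B, J, x, i, j)" rule: act.cases) auto

lemma lp_feasible_act: "lp_feasible I J W B x (act W B J x) (net I J W B x)"
  unfolding lp_feasible_def
proof (intro conjI ballI)
  fix i j assume "i \<in> {2..I}"
  then obtain k where "i = Suc k" "k \<ge> 1"
    by (cases i) auto
  then show "(\<Sum>jh = 1..J (i - 1). W jh i j * act W B J x (i - 1) jh) + B i j \<le> act W B J x i j"
    using act_Suc[of k W B J x j] by simp
qed (auto simp: act_nonneg net_def)

lemma lp_feasible_act_le:
  assumes feasible: "lp_feasible I J W B x \<sigma> \<theta>"
    and W_nonneg: "\<forall>i\<in>{1..I+1}. \<forall>j\<in>{1..J i}. \<forall>jh\<in>{1..J (i - 1)}. W jh i j \<ge> 0"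
  shows "i \<in> {1..I} \<Longrightarrow> j \<in> {1..J i} \<Longrightarrow> act W B J x i j \<le> \<sigma> i j"
proof (induction i arbitrary: j)
  case 0
  then show ?case by simp
next
  case (Suc i)
  show ?case
  proof (cases "i = 0")
    case True
    then show ?thesis
      using feasible Suc.prems unfolding lp_feasible_def by auto
  next
    case False
    have "(\<Sum>jh = 1..J i. W jh (Suc i) j * act W B J x i jh)
        \<le> (\<Sum>jh = 1..J i. W jh (Suc i) j * \<sigma> i jh)"
      using W_nonneg Suc False by (intro sum_mult_left_mono) auto
    moreover have "Suc i \<in> {2..I}"
      using Suc.prems False by auto
    then have "(\<Sum>jh = 1..J i. W jh (Suc i) j * \<sigma> i jh) + B (Suc i) j \<le> \<sigma> (Suc i) j"
      using feasible Suc.prems unfolding lp_feasible_def by fastforce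
    moreover have "0 \<le> \<sigma> (Suc i) j"
      using feasible Suc.prems unfolding lp_feasible_def by auto
    ultimately show ?thesis
      using act_Suc[of i W B J x j] False by auto
  qed
qed

lemma lp_feasible_net_le:
  assumes feasible: "lp_feasible I J W B x \<sigma> \<theta>" and "I \<ge> 1" and "J (I + 1) = 1"
    and W_nonneg: "\<forall>i\<in>{1..I+1}. \<forall>j\<in>{1..J i}. \<forall>jh\<in>{1..J (i - 1)}. W jh i j \<ge> 0"
  shows "net I J W B x \<le> \<theta>"
proof -
  have "(\<Sum>jh = 1..J I. W jh (I + 1) 1 * act W B J x I jh)
      \<le> (\<Sum>jh = 1..J I. W jh (I + 1) 1 * \<sigma> I jh)"
    using assms lp_feasible_act_le[OF feasible W_nonneg] by (intro sum_mult_left_mono) auto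
  then show ?thesis
    using feasible unfolding lp_feasible_def net_def by simp
qed

theorem mainTheorem1:
  fixes I :: nat and J :: "nat \<Rightarrow> nat"
    and W :: "nat \<Rightarrow> nat \<Rightarrow> nat \<Rightarrow> real" and B :: "nat \<Rightarrow> nat \<Rightarrow> real" and x :: real
  assumes "I \<ge> 1"
    and "\<forall>i\<in>{1..I}. J i \<ge> 1"
    and "J 0 = 1" and "J (I + 1) = 1"
    and "\<forall>i\<in>{1..I+1}. \<forall>j\<in>{1..J i}. \<forall>jh\<in>{1..J (i - 1)}. W jh i j \<ge> 0"
  shows "(\<exists>\<sigma> \<theta>. lp_feasible I J W B x \<sigma> \<theta>)
    \<and> bdd_below {\<theta>. \<exists>\<sigma>. lp_feasible I J W B x \<sigma> \<theta>}
    \<and> Inf {\<theta>. \<exists>\<sigma>. lp_feasible I J W B x \<sigma> \<theta>} = net I J W B x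
    \<and> lp_feasible I J W B x (act W B J x) (net I J W B x)
    \<and> (\<forall>\<sigma> \<theta>. lp_feasible I J W B x \<sigma> \<theta> \<longrightarrow> net I J W B x \<le> \<theta>)
    \<and> (\<forall>\<sigma> \<theta>. lp_feasible I J W B x \<sigma> \<theta> \<longrightarrow>
         (\<forall>i\<in>{1..I}. \<forall>j\<in>{1..J i}. \<sigma> i j \<ge> act W B J x i j))"
proof -
  note feasible = lp_feasible_act[of I J W B x]
  have lower: "\<forall>\<sigma> \<theta>. lp_feasible I J W B x \<sigma> \<theta> \<longrightarrow> net I J W B x \<le> \<theta>"
    using lp_feasible_net_le assms(1,4,5) by blast
  have "Inf {\<theta>. \<exists>\<sigma>. lp_feasible I J W B x \<sigma> \<theta>} = net I J W B x"
    by (rule cInf_eq_minimum) (use feasible lower in auto)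
  moreover have "bdd_below {\<theta>. \<exists>\<sigma>. lp_feasible I J W B x \<sigma> \<theta>}"
    using lower by (auto simp: bdd_below_def)
  ultimately show ?thesis
    using feasible lower lp_feasible_act_le[OF _ assms(5)] by blast
qed

end
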